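(* Let $q$ be even and let $U$ be an intersecting family of polynomials over $\mathbb{F}_q$ of degree at most $2$ with $|U|>\frac{q^2+q}{2}$. Suppose $H\subseteq U$ has more than $\frac{q^2}{2}$ elements and there exist $\alpha,\beta\in\mathbb{F}_q$ with $h(\alpha)=\beta$ for all $h\in H$. Then $f(\alpha)=\beta$ for every $f\in U$.
   Context: A set of polynomials over $\mathbb{F}_q$ is intersecting if for any two members $f_1,f_2$ the graphs $\{(x,f_i(x)):x\in\mathbb{F}_q\}$ share at least one point. *)

theory Defs
  imports "HOL-Computational_Algebra.Polynomial"
begin

definition intersecting :: "'a::field poly set \<Rightarrow> bool" where
  "intersecting U \<longleftrightarrow> (\<forall>f1\<in>U. \<forall>f2\<in>U. \<exists>x. poly f1 x = poly f2 x)"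

end

theory Submission
  imports Defs
begin

text \<open>Write \<open>h\<^sub>i\<close> for the coefficient of \<open>x\<^sup>i\<close> in \<open>h\<close>.  In characteristic 2 a polynomial of
  degree at most 2 satisfies \<open>h (\<alpha> + t) = h \<alpha> + h\<^sub>1 t + h\<^sub>2 t\<^sup>2\<close>, so a quadratic through \<open>(\<alpha>, \<beta>)\<close>
  with prescribed \<open>h\<^sub>1 = a\<close> is determined by \<open>h\<^sub>2\<close>.  If \<open>g \<alpha> \<noteq> \<beta>\<close> and \<open>a \<noteq> g\<^sub>1\<close>, such an \<open>h\<close> meets
  \<open>g\<close> only if \<open>h\<^sub>2 - g\<^sub>2\<close> lies in the image of \<open>s \<mapsto> c s\<^sup>2 + d s\<close> with \<open>c = \<beta> - g \<alpha> \<noteq> 0\<close> and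
  \<open>d = a - g\<^sub>1 \<noteq> 0\<close>, a map that is two-to-one; so at most \<open>q/2\<close> of them meet \<open>g\<close>.

  Now let \<open>f \<in> U\<close> with \<open>f \<alpha> \<noteq> \<beta>\<close>.  If some \<open>g \<in> U\<close> with \<open>g \<alpha> \<noteq> \<beta>\<close> had a linear coefficient
  different from \<open>f\<^sub>1\<close>, then every linear-coefficient class of \<open>H\<close> would have at most \<open>q/2\<close>
  members (use \<open>g\<close> for the class \<open>f\<^sub>1\<close> and \<open>f\<close> for the others), contradicting
  \<open>|H| > q\<^sup>2/2\<close>.  Hence all members of \<open>U\<close> off \<open>(\<alpha>, \<beta>)\<close> lie in the class \<open>f\<^sub>1\<close>.  This class
  has at most \<open>q\<close> members, since intersecting quadratics with equal coefficients of \<open>x\<close> and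
  \<open>x\<^sup>2\<close> coincide, and every other class of \<open>U\<close> passes through \<open>(\<alpha>, \<beta>)\<close> and so has at most
  \<open>q/2\<close> members.  Thus \<open>|U| \<le> q + (q - 1) q/2 = (q\<^sup>2 + q)/2\<close>.\<close>

lemma card_eq_sum_card_fibers:
  assumes "finite A" "finite T" "f ` A \<subseteq> T"
  shows "card A = (\<Sum>y\<in>T. card {x\<in>A. f x = y})"
  using sum.group[OF assms, of "\<lambda>_. 1::nat"] by simp

lemma card_image_two_to_one_le:
  assumes "finite A"
    and "\<And>x. x \<in> A \<Longrightarrow> \<sigma> x \<in> A" "\<And>x. x \<in> A \<Longrightarrow> \<sigma> x \<noteq> x" "\<And>x. x \<in> A \<Longrightarrow> f (\<sigma> x) = f x"
  shows "2 * card (f ` A) \<le> card A"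
proof -
  have "2 * card (f ` A) = (\<Sum>y\<in>f ` A. 2)" by simp
  also have "\<dots> \<le> (\<Sum>y\<in>f ` A. card {x\<in>A. f x = y})"
  proof (rule sum_mono)
    fix y assume "y \<in> f ` A"
    then obtain x where x: "x \<in> A" "f x = y" by blast
    have "{x, \<sigma> x} \<subseteq> {x\<in>A. f x = y}" using x assms(2,4) by auto
    then have "card {x, \<sigma> x} \<le> card {x\<in>A. f x = y}" using assms(1) by (intro card_mono) auto
    then show "2 \<le> card {x\<in>A. f x = y}" using assms(3)[OF x(1)] by simp
  qed
  also have "\<dots> = card A" using card_eq_sum_card_fibers[OF assms(1), of "f ` A" f] assms(1) by simp
  finally show ?thesis .
qed

lemma two_eq_zero_if_even_card:
  assumes "even (card (UNIV :: 'a set))"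
  shows "(2::'a::{finite,field}) = 0"
proof (rule ccontr)
  assume two: "(2::'a) \<noteq> 0"
  define A where "A = UNIV - {0::'a}"
  let ?C = "(\<lambda>x. {x, - x}) ` A"
  have "2 * card ?C = card (\<Union>?C)"
  proof (rule card_partition)
    show "card c = 2" if c: "c \<in> ?C" for c
    proof -
      obtain x where x: "x \<noteq> 0" "c = {x, - x}" using c by (auto simp: A_def)
      then have "2 * x \<noteq> 0" using two by simp
      then have "x \<noteq> - x" unfolding mult_2 add_eq_0_iff .
      then show ?thesis using x by (simp add: card_2_iff)
    qed
    show "c1 \<inter> c2 = {}" if c1: "c1 \<in> ?C" and c2: "c2 \<in> ?C" and ne: "c1 \<noteq> c2" for c1 c2
    proof -
      obtain x y where "c1 = {x, - x}" "c2 = {y, - y}" using c1 c2 by blast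
      then show ?thesis using ne by (auto simp: minus_equation_iff[of x])
    qed
  qed auto
  moreover have "\<Union>?C = A" by (auto simp: A_def)
  moreover have "card A + 1 = card (UNIV :: 'a set)"
    by (simp add: A_def card_Diff_singleton card_gt_0_iff)
  ultimately have "card (UNIV :: 'a set) = 2 * card ?C + 1" by simp
  then show False using assms by simp
qed

lemma poly_degree_le_2:
  fixes p :: "'a::comm_semiring_1 poly"
  assumes "degree p \<le> 2"
  shows "poly p x = coeff p 0 + coeff p 1 * x + coeff p 2 * x^2"
proof -
  have "poly p x = (\<Sum>i\<le>2. coeff p i * x ^ i)"
    unfolding poly_altdef
    by (rule sum.mono_neutral_left) (use assms in \<open>auto simp: coeff_eq_0\<close>)
  then show ?thesis by (simp add: numeral_2_eq_2)
qed

lemma poly_shift_degree_le_2_char_2: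
  fixes p :: "'a::comm_ring_1 poly"
  assumes "(2::'a) = 0" "degree p \<le> 2"
  shows "poly p (\<alpha> + t) = poly p \<alpha> + coeff p 1 * t + coeff p 2 * t^2"
proof -
  have "(\<alpha> + t)^2 = \<alpha>^2 + t^2 + 2 * \<alpha> * t" by (simp add: power2_sum)
  then show ?thesis using assms by (simp add: poly_degree_le_2 algebra_simps)
qed

lemma quadratic_poly_eqI:
  fixes p r :: "'a::comm_ring_1 poly"
  assumes "degree p \<le> 2" "degree r \<le> 2" "coeff p 1 = coeff r 1" "coeff p 2 = coeff r 2"
    and "poly p x = poly r x"
  shows "p = r"
proof (rule poly_eqI)
  have "coeff p 0 = coeff r 0" using assms by (simp add: poly_degree_le_2)
  then show "coeff p n = coeff r n" for n
    using assms(1-4) by (cases "n \<le> 2") (auto simp: coeff_eq_0 le_Suc_eq numeral_2_eq_2)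
qed

lemma card_range_quadratic_char_2_le:
  fixes c d :: "'a::{finite,field}"
  assumes "(2::'a) = 0" "c \<noteq> 0" "d \<noteq> 0"
  shows "2 * card (range (\<lambda>s. c * s^2 + d * s)) \<le> card (UNIV :: 'a set)"
  \<comment> \<open>in characteristic 2 the map is additive with kernel \<open>{0, d / c}\<close>\<close>
proof (rule card_image_two_to_one_le[where \<sigma> = "\<lambda>s. s + d / c"])
  fix s :: 'a
  have "c * (s + d / c)^2 + d * (s + d / c) = c * s^2 + d * s + 2 * (s * d + d^2 / c)"
    using assms(2) by (simp add: field_simps power2_eq_square)
  then show "c * (s + d / c)^2 + d * (s + d / c) = c * s^2 + d * s"
    using assms(1) by simp
qed (use assms in auto)

lemma minus_eq_self_if_two_eq_zero:
  assumes "(2::'a::ring_1) = 0"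
  shows "- a = (a::'a)"
proof -
  have "a + a = 0" using assms by (metis mult_2 mult_zero_left)
  then show ?thesis by (metis add_eq_0_iff)
qed

lemma coeff_2_in_range_if_root_char_2:
  fixes p :: "'a::field poly"
  assumes "(2::'a) = 0" "degree p \<le> 2" "poly p \<alpha> \<noteq> 0" "poly p x = 0"
  shows "coeff p 2 \<in> range (\<lambda>s. poly p \<alpha> * s^2 + coeff p 1 * s)"
proof
  define t where "t = x - \<alpha>"
  have t: "t \<noteq> 0" using assms(3,4) by (auto simp: t_def)
  have "poly p \<alpha> + coeff p 1 * t + coeff p 2 * t^2 = 0"
    using poly_shift_degree_le_2_char_2[OF assms(1,2), of \<alpha> t] assms(4) by (simp add: t_def)
  then have "coeff p 2 * t^2 = - (poly p \<alpha> + coeff p 1 * t)"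
    unfolding add_eq_0_iff .
  also have "\<dots> = poly p \<alpha> + coeff p 1 * t"
    using assms(1) by (rule minus_eq_self_if_two_eq_zero)
  finally show "coeff p 2 = poly p \<alpha> * (inverse t)^2 + coeff p 1 * inverse t"
    using t by (simp add: field_simps power2_eq_square)
qed simp

lemma card_quadratics_through_point_meeting_le:
  fixes g :: "'a::{finite,field} poly"
  assumes "(2::'a) = 0" "degree g \<le> 2" "poly g \<alpha> \<noteq> \<beta>" "a \<noteq> coeff g 1"
    and A: "\<And>h. h \<in> A \<Longrightarrow> degree h \<le> 2 \<and> poly h \<alpha> = \<beta> \<and> coeff h 1 = a \<and> (\<exists>x. poly h x = poly g x)"
  shows "2 * card A \<le> card (UNIV :: 'a set)"
proof -
  define R where "R = range (\<lambda>s. (\<beta> - poly g \<alpha>) * s^2 + (a - coeff g 1) * s)"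
  have "inj_on (\<lambda>h. coeff h 2 - coeff g 2) A"
  proof (rule inj_onI)
    fix h r assume "h \<in> A" "r \<in> A" "coeff h 2 - coeff g 2 = coeff r 2 - coeff g 2"
    then show "h = r" using A[of h] A[of r] by (intro quadratic_poly_eqI[of h r \<alpha>]) auto
  qed
  then have "card A = card ((\<lambda>h. coeff h 2 - coeff g 2) ` A)" by (simp add: card_image)
  also have "\<dots> \<le> card R"
  proof (rule card_mono)
    show "(\<lambda>h. coeff h 2 - coeff g 2) ` A \<subseteq> R"
    proof clarify
      fix h assume "h \<in> A"
      then obtain x where h: "degree h \<le> 2" "poly h \<alpha> = \<beta>" "coeff h 1 = a" "poly (h - g) x = 0"
        using A by auto
      have "coeff (h - g) 2 \<in> range (\<lambda>s. poly (h - g) \<alpha> * s^2 + coeff (h - g) 1 * s)"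
        using assms(1-3) h by (intro coeff_2_in_range_if_root_char_2) (auto intro: degree_diff_le)
      then show "coeff h 2 - coeff g 2 \<in> R" using h by (simp add: R_def)
    qed
  qed simp
  finally have "card A \<le> card R" .
  moreover have "2 * card R \<le> card (UNIV :: 'a set)"
    unfolding R_def using assms(3,4) by (intro card_range_quadratic_char_2_le[OF assms(1)]) auto
  ultimately show ?thesis by linarith
qed

lemma card_linear_coeff_class_le:
  fixes U :: "'a::{finite,field} poly set"
  assumes "intersecting U" "\<forall>f\<in>U. degree f \<le> 2"
  shows "card {g\<in>U. coeff g 1 = a} \<le> card (UNIV :: 'a set)"
proof -
  have "inj_on (\<lambda>g. coeff g 2) {g\<in>U. coeff g 1 = a}"
  proof (rule inj_onI)
    fix g r assume g: "g \<in> {g\<in>U. coeff g 1 = a}" and r: "r \<in> {g\<in>U. coeff g 1 = a}"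
      and "coeff g 2 = coeff r 2"
    moreover obtain x where "poly g x = poly r x"
      using assms(1) g r unfolding intersecting_def by blast
    ultimately show "g = r" using assms(2) by (intro quadratic_poly_eqI[of g r x]) auto
  qed
  then show ?thesis by (metis card_image card_mono finite subset_UNIV)
qed

lemma card_through_point_le_if_linear_coeffs_differ:
  fixes U H :: "'a::{finite,field} poly set"
  assumes "(2::'a) = 0" "intersecting U" "\<forall>f\<in>U. degree f \<le> 2"
    and "H \<subseteq> U" "\<forall>h\<in>H. poly h \<alpha> = \<beta>"
    and "f \<in> U" "poly f \<alpha> \<noteq> \<beta>" "g \<in> U" "poly g \<alpha> \<noteq> \<beta>" "coeff f 1 \<noteq> coeff g 1"
  shows "2 * card H \<le> card (UNIV :: 'a set)^2"
proof (cases "finite H")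
  case True
  have class_le: "2 * card {h\<in>H. coeff h 1 = a} \<le> card (UNIV :: 'a set)" for a
  proof -
    obtain k where "k \<in> U" "poly k \<alpha> \<noteq> \<beta>" "a \<noteq> coeff k 1"
      using assms(6-10) by metis
    then show ?thesis
      using assms(2-5) unfolding intersecting_def
      by (intro card_quadratics_through_point_meeting_le[OF assms(1), of k \<alpha> \<beta> a]) auto
  qed
  have "2 * card H = (\<Sum>a\<in>UNIV. 2 * card {h\<in>H. coeff h 1 = a})"
    using card_eq_sum_card_fibers[OF True, of UNIV "\<lambda>h. coeff h 1"] by (simp add: sum_distrib_left)
  also have "\<dots> \<le> (\<Sum>a\<in>(UNIV :: 'a set). card (UNIV :: 'a set))"
    by (intro sum_mono class_le)
  finally show ?thesis by (simp add: power2_eq_square)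
qed simp

lemma card_le_if_linear_coeffs_agree_off_point:
  fixes U :: "'a::{finite,field} poly set"
  assumes "(2::'a) = 0" "intersecting U" "\<forall>f\<in>U. degree f \<le> 2"
    and "f \<in> U" "poly f \<alpha> \<noteq> \<beta>" "\<forall>g\<in>U. poly g \<alpha> \<noteq> \<beta> \<longrightarrow> coeff g 1 = coeff f 1"
  shows "2 * card U \<le> card (UNIV :: 'a set)^2 + card (UNIV :: 'a set)"
proof (cases "finite U")
  case True
  let ?q = "card (UNIV :: 'a set)"
  have class_le: "2 * card {g\<in>U. coeff g 1 = a} \<le> ?q + (if a = coeff f 1 then ?q else 0)" for a
  proof (cases "a = coeff f 1")
    case True
    then show ?thesis using card_linear_coeff_class_le[OF assms(2,3), of a] by simp
  next
    case False
    have "2 * card {g\<in>U. coeff g 1 = a} \<le> ?q"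
    proof (rule card_quadratics_through_point_meeting_le[OF assms(1) _ assms(5)])
      fix h assume "h \<in> {g\<in>U. coeff g 1 = a}"
      then show "degree h \<le> 2 \<and> poly h \<alpha> = \<beta> \<and> coeff h 1 = a \<and> (\<exists>x. poly h x = poly f x)"
        using assms(2-4,6) False unfolding intersecting_def by auto
    qed (use assms(3,4) False in auto)
    then show ?thesis using False by simp
  qed
  have "2 * card U = (\<Sum>a\<in>UNIV. 2 * card {g\<in>U. coeff g 1 = a})"
    using card_eq_sum_card_fibers[OF True, of UNIV "\<lambda>g. coeff g 1"] by (simp add: sum_distrib_left)
  also have "\<dots> \<le> (\<Sum>a\<in>UNIV. ?q + (if a = coeff f 1 then ?q else 0))"
    by (intro sum_mono class_le)
  finally show ?thesis by (simp add: sum.distrib power2_eq_square)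
qed simp

theorem lemma6:
  fixes U H :: "'a::{finite,field} poly set" and \<alpha> \<beta> :: 'a
  assumes "even (card (UNIV :: 'a set))"
    and "intersecting U"
    and "\<forall>f\<in>U. degree f \<le> 2"
    and "real (card U) > (real (card (UNIV :: 'a set)) ^ 2 + real (card (UNIV :: 'a set))) / 2"
    and "H \<subseteq> U"
    and "real (card H) > real (card (UNIV :: 'a set)) ^ 2 / 2"
    and "\<forall>h\<in>H. poly h \<alpha> = \<beta>"
  shows "\<forall>f\<in>U. poly f \<alpha> = \<beta>"
proof (rule ccontr)
  let ?q = "card (UNIV :: 'a set)"
  assume "\<not> (\<forall>f\<in>U. poly f \<alpha> = \<beta>)"
  then obtain f where f: "f \<in> U" "poly f \<alpha> \<noteq> \<beta>" by blast
  have char_2: "(2::'a) = 0" using assms(1) by (rule two_eq_zero_if_even_card)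
  have "real (?q^2) < real (2 * card H)" using assms(6) by simp
  then have H_big: "?q^2 < 2 * card H" by (simp only: of_nat_less_iff)
  have "real (?q^2 + ?q) < real (2 * card U)" using assms(4) by simp
  then have U_big: "?q^2 + ?q < 2 * card U" by (simp only: of_nat_less_iff)
  have "coeff g 1 = coeff f 1" if "g \<in> U" "poly g \<alpha> \<noteq> \<beta>" for g
  proof (rule ccontr)
    assume "coeff g 1 \<noteq> coeff f 1"
    then have "2 * card H \<le> ?q^2"
      using card_through_point_le_if_linear_coeffs_differ[OF char_2 assms(2,3,5,7) f] that by simp
    with H_big show False by simp
  qed
  then have "2 * card U \<le> ?q^2 + ?q"
    using card_le_if_linear_coeffs_agree_off_point[OF char_2 assms(2,3) f] by blast
  with U_big show False by simp
qed

end
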